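(* Let $p>1$ and $h\in C[0,\infty)$ with $h(s)>0$ for $s>0$, and assume \[ \lim_{t\to\infty} t^{-(p+1)/2}\int_0^t s^{p+1}h(s)\,ds=\infty. \] For $c>0$ define \[ E(c)=\inf_{w\in H^1_0(0,c),\,w\not\equiv0}\frac{\int_0^c|w'(s)|^2ds}{\left(\int_0^c h(s)|w(s)|^{p+1}ds\right)^{2/(p+1)}}. \] Then $E(c)\to0$ as $c\to\infty$. *)

theory Defs
  imports "HOL-Analysis.Analysis"
begin

text \<open>H^1_0(0,c) in one dimension, via the absolutely continuous representative:
  w belongs to H^1_0(0,c) with weak derivative g iff g is in L^2(0,c) and
  w(x) = integral of g over [0,x] for x in [0,c], with w(c) = 0 (and w(0) = 0 automatically).\<close>
definition H10_with_deriv :: "real \<Rightarrow> (real \<Rightarrow> real) \<Rightarrow> (real \<Rightarrow> real) \<Rightarrow> bool" where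
  "H10_with_deriv c w g \<longleftrightarrow>
     set_integrable lborel {0..c} g \<and>
     set_integrable lborel {0..c} (\<lambda>s. (g s)\<^sup>2) \<and>
     (\<forall>x\<in>{0..c}. w x = (LINT s:{0..x}|lborel. g s)) \<and>
     w c = 0"

definition E_quot :: "(real \<Rightarrow> real) \<Rightarrow> real \<Rightarrow> real \<Rightarrow> real" where
  "E_quot h p c = Inf { (LINT s:{0..c}|lborel. (g s)\<^sup>2) /
        (LINT s:{0..c}|lborel. h s * \<bar>w s\<bar> powr (p + 1)) powr (2 / (p + 1))
     | w g. H10_with_deriv c w g \<and> (\<exists>x\<in>{0..c}. w x \<noteq> 0) }"

end

theory Submission
  imports Defs
begin

text \<open>Test the quotient with the tent function w(s) = min s (c - s). Since |w'| = 1 the numerator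
  is c, and since w(s) = s on [0, c/2] the denominator is at least I(c/2)^(2/(p+1)), where
  I(t) is the integral of s^(p+1) h(s) over [0, t]. With t = c/2 this reads
  0 <= E(c) <= 2 (t^(-(p+1)/2) I(t))^(-2/(p+1)), and the growth hypothesis drives the bound to 0.\<close>

lemma set_integral_nonneg:
  fixes f :: "'a \<Rightarrow> real"
  assumes "\<And>x. x \<in> A \<Longrightarrow> 0 \<le> f x"
  shows "0 \<le> (LINT x:A|M. f x)"
  unfolding set_lebesgue_integral_def
  by (rule Bochner_Integration.integral_nonneg) (simp add: assms indicator_def)

lemma H10_with_deriv_vanishes_at_0:
  assumes "H10_with_deriv c w g" and "0 \<le> c"
  shows "w 0 = 0"
proof -
  have "(LINT s:{0}|lborel. g s) = 0"
    unfolding set_lebesgue_integral_def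
    by (rule integral_eq_zero_AE) (use AE_lborel_singleton[of 0] in \<open>auto elim!: eventually_mono\<close>)
  with assms show ?thesis
    by (simp add: H10_with_deriv_def)
qed

definition tent :: "real \<Rightarrow> real \<Rightarrow> real" where
  "tent c x = min x (c - x)"

definition tent_slope :: "real \<Rightarrow> real \<Rightarrow> real" where
  "tent_slope c s = (if s \<le> c / 2 then 1 else -1)"

lemma set_integrable_tent_slope: "set_integrable lborel {a..b} (tent_slope c)"
  unfolding set_integrable_def
  by (rule integrableI_bounded_set_indicator[where B = 1])
    (auto simp: tent_slope_def emeasure_lborel_Icc_eq)

lemma power2_tent_slope [simp]: "(tent_slope c s)\<^sup>2 = 1"
  by (simp add: tent_slope_def)

lemma set_integral_tent_slope:
  assumes "0 \<le> x" "x \<le> c"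
  shows "(LINT s:{0..x}|lborel. tent_slope c s) = tent c x"
proof (cases "x \<le> c / 2")
  case True
  have "(LINT s:{0..x}|lborel. tent_slope c s) = (LINT s:{0..x}|lborel. 1)"
    by (rule set_lebesgue_integral_cong) (use True in \<open>auto simp: tent_slope_def\<close>)
  with True assms show ?thesis by (simp add: set_integral_const tent_def)
next
  case False
  have "{0..x} = {0..c/2} \<union> {c/2<..x}" "{0..c/2} \<inter> {c/2<..x} = {}"
    using False assms by auto
  then have "(LINT s:{0..x}|lborel. tent_slope c s)
      = (LINT s:{0..c/2}|lborel. tent_slope c s) + (LINT s:{c/2<..x}|lborel. tent_slope c s)"
    using set_integral_Un[OF _ set_integrable_tent_slope
        set_integrable_subset[OF set_integrable_tent_slope[of "c/2" x]]]
    by (simp add: subset_eq)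
  also have "(LINT s:{0..c/2}|lborel. tent_slope c s) = (LINT s:{0..c/2}|lborel. 1)"
    by (rule set_lebesgue_integral_cong) (auto simp: tent_slope_def)
  also have "(LINT s:{c/2<..x}|lborel. tent_slope c s) = (LINT s:{c/2<..x}|lborel. -1)"
    by (rule set_lebesgue_integral_cong) (auto simp: tent_slope_def)
  finally show ?thesis
    using False assms by (simp add: set_integral_const tent_def)
qed

lemma H10_tent:
  assumes "0 \<le> c"
  shows "H10_with_deriv c (tent c) (tent_slope c)"
  unfolding H10_with_deriv_def
  using assms by (simp add: set_integrable_tent_slope set_integral_tent_slope tent_def
      borel_integrable_atLeastAtMost')

lemma set_integral_mono_set:
  fixes f :: "'a \<Rightarrow> real"
  assumes "set_integrable M B f" "A \<in> sets M" "A \<subseteq> B" "\<And>x. x \<in> B \<Longrightarrow> 0 \<le> f x"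
  shows "(LINT x:A|M. f x) \<le> (LINT x:B|M. f x)"
proof -
  have "set_integrable M A f"
    using set_integrable_subset[OF assms(1-3)] .
  with assms show ?thesis
    unfolding set_lebesgue_integral_def set_integrable_def
    by (intro integral_mono) (auto simp: indicator_def)
qed

definition rayleigh_quotient ::
    "(real \<Rightarrow> real) \<Rightarrow> real \<Rightarrow> real \<Rightarrow> (real \<Rightarrow> real) \<Rightarrow> (real \<Rightarrow> real) \<Rightarrow> real" where
  "rayleigh_quotient h p c w g = (LINT s:{0..c}|lborel. (g s)\<^sup>2) /
     (LINT s:{0..c}|lborel. h s * \<bar>w s\<bar> powr (p + 1)) powr (2 / (p + 1))"

lemma E_quot_eq_Inf_rayleigh_quotient:
  "E_quot h p c =
     Inf {rayleigh_quotient h p c w g | w g. H10_with_deriv c w g \<and> (\<exists>x\<in>{0..c}. w x \<noteq> 0)}"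
  by (simp add: E_quot_def rayleigh_quotient_def)

lemma rayleigh_quotient_nonneg:
  assumes h_nonneg: "\<And>s. 0 < s \<Longrightarrow> s \<le> c \<Longrightarrow> 0 \<le> h s"
    and "0 \<le> c" and "H10_with_deriv c w g"
  shows "0 \<le> rayleigh_quotient h p c w g"
proof -
  have "0 \<le> h s * \<bar>w s\<bar> powr (p + 1)" if "s \<in> {0..c}" for s
    using that h_nonneg H10_with_deriv_vanishes_at_0[OF assms(3,2)]
    by (cases "s = 0") auto
  then show ?thesis
    unfolding rayleigh_quotient_def
    by (intro divide_nonneg_nonneg set_integral_nonneg) auto
qed

lemma E_quot_le_rayleigh_quotient:
  assumes h_nonneg: "\<And>s. 0 < s \<Longrightarrow> s \<le> c \<Longrightarrow> 0 \<le> h s"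
    and "0 \<le> c" and "H10_with_deriv c w g" and "\<exists>x\<in>{0..c}. w x \<noteq> 0"
  shows "E_quot h p c \<le> rayleigh_quotient h p c w g"
  unfolding E_quot_eq_Inf_rayleigh_quotient
proof (rule cInf_lower)
  show "bdd_below {rayleigh_quotient h p c w g | w g. H10_with_deriv c w g \<and> (\<exists>x\<in>{0..c}. w x \<noteq> 0)}"
    using rayleigh_quotient_nonneg[OF h_nonneg \<open>0 \<le> c\<close>] by (auto intro!: bdd_belowI[of _ 0])
qed (use assms in blast)

lemma E_quot_nonneg:
  assumes h_nonneg: "\<And>s. 0 < s \<Longrightarrow> s \<le> c \<Longrightarrow> 0 \<le> h s"
    and "0 < c"
  shows "0 \<le> E_quot h p c"
  unfolding E_quot_eq_Inf_rayleigh_quotient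
proof (rule cInf_greatest)
  have "H10_with_deriv c (tent c) (tent_slope c) \<and> (\<exists>x\<in>{0..c}. tent c x \<noteq> 0)"
    using H10_tent[of c] \<open>0 < c\<close> by (auto simp: tent_def intro!: bexI[of _ "c / 2"])
  then show "{rayleigh_quotient h p c w g | w g. H10_with_deriv c w g \<and> (\<exists>x\<in>{0..c}. w x \<noteq> 0)} \<noteq> {}"
    by blast
qed (use rayleigh_quotient_nonneg[OF h_nonneg] \<open>0 < c\<close> in auto)

lemma moment_le_tent_integral:
  assumes "-1 < p" and h_cont: "continuous_on {0..c} h"
    and h_nonneg: "\<And>s. 0 < s \<Longrightarrow> s \<le> c \<Longrightarrow> 0 \<le> h s" and "0 \<le> c"
  shows "(LINT s:{0..c/2}|lborel. s powr (p + 1) * h s)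
      \<le> (LINT s:{0..c}|lborel. h s * \<bar>tent c s\<bar> powr (p + 1))"
proof -
  have "(LINT s:{0..c/2}|lborel. s powr (p + 1) * h s)
      = (LINT s:{0..c/2}|lborel. h s * \<bar>tent c s\<bar> powr (p + 1))"
    by (rule set_lebesgue_integral_cong) (auto simp: tent_def)
  also have "\<dots> \<le> (LINT s:{0..c}|lborel. h s * \<bar>tent c s\<bar> powr (p + 1))"
  proof (rule set_integral_mono_set)
    have "continuous_on {0..c} (\<lambda>s. \<bar>tent c s\<bar> powr (p + 1))"
      unfolding tent_def using \<open>-1 < p\<close>
      by (intro continuous_on_powr' continuous_intros) auto
    then show "set_integrable lborel {0..c} (\<lambda>s. h s * \<bar>tent c s\<bar> powr (p + 1))"
      by (intro borel_integrable_atLeastAtMost' continuous_on_mult h_cont)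
    show "0 \<le> h s * \<bar>tent c s\<bar> powr (p + 1)" if "s \<in> {0..c}" for s
      using that h_nonneg by (cases "s = 0") (auto simp: tent_def)
  qed (use \<open>0 \<le> c\<close> in auto)
  finally show ?thesis .
qed

lemma E_quot_le_moment:
  assumes "-1 < p" and "continuous_on {0..c} h"
    and h_nonneg: "\<And>s. 0 < s \<Longrightarrow> s \<le> c \<Longrightarrow> 0 \<le> h s" and "0 < c"
    and moment_pos: "0 < (LINT s:{0..c/2}|lborel. s powr (p + 1) * h s)"
  shows "E_quot h p c \<le> c / (LINT s:{0..c/2}|lborel. s powr (p + 1) * h s) powr (2 / (p + 1))"
proof -
  have "E_quot h p c \<le> rayleigh_quotient h p c (tent c) (tent_slope c)"
    using \<open>0 < c\<close>
    by (intro E_quot_le_rayleigh_quotient h_nonneg H10_tent bexI[of _ "c / 2"]) (auto simp: tent_def)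
  also have "\<dots> = c / (LINT s:{0..c}|lborel. h s * \<bar>tent c s\<bar> powr (p + 1)) powr (2 / (p + 1))"
    using \<open>0 < c\<close> by (simp add: rayleigh_quotient_def set_integral_const)
  also have "\<dots> \<le> c / (LINT s:{0..c/2}|lborel. s powr (p + 1) * h s) powr (2 / (p + 1))"
    using moment_le_tent_integral[OF assms(1-3)] moment_pos \<open>-1 < p\<close> \<open>0 < c\<close>
    by (intro divide_left_mono powr_mono2 mult_pos_pos) auto
  finally show ?thesis .
qed

lemma E_quot_le_normalized_moment:
  assumes "-1 < p" and "continuous_on {0..c} h"
    and "\<And>s. 0 < s \<Longrightarrow> s \<le> c \<Longrightarrow> 0 \<le> h s" and "0 < c"
    and normalized_pos: "0 < (c/2) powr (- (p + 1) / 2) * (LINT s:{0..c/2}|lborel. s powr (p + 1) * h s)"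
  shows "E_quot h p c
    \<le> 2 * ((c/2) powr (- (p + 1) / 2) * (LINT s:{0..c/2}|lborel. s powr (p + 1) * h s)) powr (- (2 / (p + 1)))"
proof -
  define t where "t = c / 2"
  define I where "I = (LINT s:{0..t}|lborel. s powr (p + 1) * h s)"
  define F where "F = t powr (- (p + 1) / 2) * I"
  have "0 < t" "0 < F"
    using \<open>0 < c\<close> normalized_pos by (simp_all add: t_def F_def I_def)
  have "t powr ((p + 1) / 2) * t powr (- (p + 1) / 2) = 1"
    using \<open>0 < t\<close> by (simp add: powr_add[symmetric] add_divide_distrib[symmetric])
  then have I_eq: "I = t powr ((p + 1) / 2) * F"
    by (simp add: F_def mult.assoc[symmetric])
  then have "0 < I"
    using \<open>0 < t\<close> \<open>0 < F\<close> by simp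
  have "(p + 1) / 2 * (2 / (p + 1)) = 1"
    using \<open>-1 < p\<close> by simp
  then have "(t powr ((p + 1) / 2)) powr (2 / (p + 1)) = t"
    using \<open>0 < t\<close> by (simp only: powr_powr powr_one_gt_zero_iff)
  then have "I powr (2 / (p + 1)) = t * F powr (2 / (p + 1))"
    using \<open>0 < t\<close> \<open>0 < F\<close> by (simp add: I_eq powr_mult)
  then have "c / I powr (2 / (p + 1)) = 2 * F powr (- (2 / (p + 1)))"
    using \<open>0 < t\<close> \<open>0 < F\<close> \<open>0 < I\<close> by (simp add: t_def powr_minus field_simps)
  with E_quot_le_moment[OF assms(1-4)] \<open>0 < I\<close> show ?thesis
    by (simp add: t_def I_def F_def)
qed

theorem lemma2p3:
  fixes h :: "real \<Rightarrow> real" and p :: real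
  assumes "p > 1"
    and "continuous_on {0..} h"
    and "\<And>s. s > 0 \<Longrightarrow> h s > 0"
    and "filterlim (\<lambda>t. t powr (- (p + 1) / 2) * (LINT s:{0..t}|lborel. s powr (p + 1) * h s))
           at_top at_top"
  shows "(E_quot h p \<longlongrightarrow> 0) at_top"
proof -
  define F where "F t = t powr (- (p + 1) / 2) * (LINT s:{0..t}|lborel. s powr (p + 1) * h s)" for t
  have "filterlim (\<lambda>c::real. c / 2) at_top at_top"
    using filterlim_tendsto_pos_mult_at_top[OF tendsto_const[of "1 / 2"] _ filterlim_ident] by simp
  then have "filterlim (\<lambda>c. F (c / 2)) at_top at_top"
    using filterlim_compose[OF assms(4)] by (simp add: F_def)
  then have bound_to_0: "((\<lambda>c. 2 * F (c / 2) powr (- (2 / (p + 1)))) \<longlongrightarrow> 0) at_top"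
    using assms(1) by (intro tendsto_mult_right_zero tendsto_neg_powr) auto
  have eventually_pos: "\<forall>\<^sub>F c in at_top. 0 < c \<and> 0 < F (c / 2)"
    using \<open>filterlim (\<lambda>c. F (c / 2)) at_top at_top\<close>
    by (intro eventually_conj eventually_gt_at_top) (simp add: filterlim_at_top_dense)
  have h_cont: "continuous_on {0..c} h" for c
    using continuous_on_subset[OF assms(2)] by auto
  have h_nonneg: "0 \<le> h s" if "0 < s" for s
    using assms(3)[OF that] by simp
  have "\<forall>\<^sub>F c in at_top. 0 \<le> E_quot h p c"
    using eventually_pos by eventually_elim (use E_quot_nonneg h_nonneg in auto)
  moreover have "\<forall>\<^sub>F c in at_top. E_quot h p c \<le> 2 * F (c / 2) powr (- (2 / (p + 1)))"
    using eventually_pos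
    by eventually_elim (use E_quot_le_normalized_moment h_cont h_nonneg assms(1) in \<open>auto simp: F_def\<close>)
  ultimately show ?thesis
    using tendsto_sandwich[OF _ _ tendsto_const bound_to_0] by blast
qed

end
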